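(* Let $S$ be a semigroup with a left fairly invariant finitely-additive probability measure $\mu$, and let $T$ be a subsemigroup of $S$ with $\mu(T)>0$. Then $T$ is left fairly amenable. The same holds with "right" in place of "left".
   Context: For a semigroup $U$, $s\in U$, $A\subseteq U$: $s$ acts injectively on the left (right) of $A$ if $a\mapsto sa$ ($a\mapsto as$) is injective on $A$. A finitely-additive probability measure on $U$ is $\mu:\mathcal P(U)\to[0,1]$ with $\mu(U)=1$, additive on disjoint sets; it is left fairly invariant if $\mu(sA)=\mu(A)$ whenever $s$ acts injectively on the left of $A$ (right fairly invariant analogously with $As$). $U$ is left (right) fairly amenable if such a measure exists. *)

theory Defs
  imports Complex_Main
begin

text \<open>A semigroup is modelled by a type of class semigroup_mult; a subsemigroup
  (or the whole semigroup, as UNIV) is a carrier set U closed under multiplication.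
  Measures are functions on subsets, only their values on subsets of U matter.\<close>

definition subsemigroup :: "'a::semigroup_mult set \<Rightarrow> bool" where
  "subsemigroup T \<longleftrightarrow> (\<forall>x\<in>T. \<forall>y\<in>T. x * y \<in> T)"

definition fa_prob_measure :: "'a set \<Rightarrow> ('a set \<Rightarrow> real) \<Rightarrow> bool" where
  "fa_prob_measure U \<mu> \<longleftrightarrow>
     (\<forall>A. A \<subseteq> U \<longrightarrow> 0 \<le> \<mu> A \<and> \<mu> A \<le> 1) \<and> \<mu> U = 1 \<and>
     (\<forall>A B. A \<subseteq> U \<longrightarrow> B \<subseteq> U \<longrightarrow> A \<inter> B = {} \<longrightarrow> \<mu> (A \<union> B) = \<mu> A + \<mu> B)"

definition left_fairly_invariant :: "'a::semigroup_mult set \<Rightarrow> ('a set \<Rightarrow> real) \<Rightarrow> bool" where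
  "left_fairly_invariant U \<mu> \<longleftrightarrow>
     (\<forall>s\<in>U. \<forall>A. A \<subseteq> U \<longrightarrow> inj_on (\<lambda>a. s * a) A \<longrightarrow> \<mu> ((\<lambda>a. s * a) ` A) = \<mu> A)"

definition right_fairly_invariant :: "'a::semigroup_mult set \<Rightarrow> ('a set \<Rightarrow> real) \<Rightarrow> bool" where
  "right_fairly_invariant U \<mu> \<longleftrightarrow>
     (\<forall>s\<in>U. \<forall>A. A \<subseteq> U \<longrightarrow> inj_on (\<lambda>a. a * s) A \<longrightarrow> \<mu> ((\<lambda>a. a * s) ` A) = \<mu> A)"

definition left_fairly_amenable :: "'a::semigroup_mult set \<Rightarrow> bool" where
  "left_fairly_amenable U \<longleftrightarrow> (\<exists>\<mu>. fa_prob_measure U \<mu> \<and> left_fairly_invariant U \<mu>)"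

definition right_fairly_amenable :: "'a::semigroup_mult set \<Rightarrow> bool" where
  "right_fairly_amenable U \<longleftrightarrow> (\<exists>\<mu>. fa_prob_measure U \<mu> \<and> right_fairly_invariant U \<mu>)"

end

theory Submission
  imports Defs
begin

(* Proof idea (as in the paper): a subsemigroup T of positive measure carries
   the conditional measure  mu_T A = mu A / mu T.  It is again a finitely-additive
   probability measure on T, and dividing by the constant mu T does not affect the
   fair-invariance equations mu (s A) = mu A, which for s in T and A a subset of T
   are instances of the invariance of mu on the whole semigroup.

   In the
   paper closure of T guarantees that translates s A stay inside T; with the
   present definitions the measure is defined on all sets. *)

definition conditional_measure :: "('a set \<Rightarrow> real) \<Rightarrow> 'a set \<Rightarrow> 'a set \<Rightarrow> real" where
  "conditional_measure \<mu> V = (\<lambda>A. \<mu> A / \<mu> V)"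

lemma fa_prob_measureD:
  assumes "fa_prob_measure U \<mu>"
  shows fa_prob_measure_nonneg: "A \<subseteq> U \<Longrightarrow> 0 \<le> \<mu> A"
    and fa_prob_measure_additive:
      "A \<subseteq> U \<Longrightarrow> B \<subseteq> U \<Longrightarrow> A \<inter> B = {} \<Longrightarrow> \<mu> (A \<union> B) = \<mu> A + \<mu> B"
  using assms unfolding fa_prob_measure_def by blast+

lemma fa_prob_measure_mono:
  assumes m: "fa_prob_measure U \<mu>" and "A \<subseteq> B" and "B \<subseteq> U"
  shows "\<mu> A \<le> \<mu> B"
proof -
  have sub: "A \<subseteq> U" "B - A \<subseteq> U" and disj: "A \<inter> (B - A) = {}"
    using assms(2,3) by blast+
  have "\<mu> B = \<mu> (A \<union> (B - A))"
    using \<open>A \<subseteq> B\<close> by (simp add: Un_absorb1)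
  also have "\<dots> = \<mu> A + \<mu> (B - A)"
    using fa_prob_measure_additive[OF m sub disj] .
  also have "\<dots> \<ge> \<mu> A"
    using fa_prob_measure_nonneg[OF m sub(2)] by simp
  finally show ?thesis .
qed

lemma fa_prob_measure_conditional:
  assumes m: "fa_prob_measure U \<mu>" and "V \<subseteq> U" and pos: "\<mu> V > 0"
  shows "fa_prob_measure V (conditional_measure \<mu> V)"
  unfolding fa_prob_measure_def conditional_measure_def
proof (intro conjI allI impI)
  fix A assume "A \<subseteq> V"
  then have "A \<subseteq> U" using \<open>V \<subseteq> U\<close> by blast
  show "0 \<le> \<mu> A / \<mu> V"
    using fa_prob_measure_nonneg[OF m \<open>A \<subseteq> U\<close>] pos by simp
  show "\<mu> A / \<mu> V \<le> 1"
    using fa_prob_measure_mono[OF m \<open>A \<subseteq> V\<close> \<open>V \<subseteq> U\<close>] pos by simp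
next
  show "\<mu> V / \<mu> V = 1" using pos by simp
next
  fix A B assume "A \<subseteq> V" "B \<subseteq> V" "A \<inter> B = {}"
  moreover have "A \<subseteq> U" "B \<subseteq> U"
    using \<open>A \<subseteq> V\<close> \<open>B \<subseteq> V\<close> \<open>V \<subseteq> U\<close> by blast+
  ultimately have "\<mu> (A \<union> B) = \<mu> A + \<mu> B"
    using fa_prob_measure_additive[OF m] by simp
  then show "\<mu> (A \<union> B) / \<mu> V = \<mu> A / \<mu> V + \<mu> B / \<mu> V"
    by (simp add: add_divide_distrib)
qed

lemma left_fairly_invariant_conditional:
  assumes "left_fairly_invariant U \<mu>" and "V \<subseteq> U"
  shows "left_fairly_invariant V (conditional_measure \<mu> V)"
  unfolding left_fairly_invariant_def conditional_measure_def
proof (intro ballI allI impI)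
  fix s A assume "s \<in> V" "A \<subseteq> V" "inj_on (\<lambda>a. s * a) A"
  with assms have "\<mu> ((\<lambda>a. s * a) ` A) = \<mu> A"
    unfolding left_fairly_invariant_def by blast
  thus "\<mu> ((\<lambda>a. s * a) ` A) / \<mu> V = \<mu> A / \<mu> V" by simp
qed

lemma right_fairly_invariant_conditional:
  assumes "right_fairly_invariant U \<mu>" and "V \<subseteq> U"
  shows "right_fairly_invariant V (conditional_measure \<mu> V)"
  unfolding right_fairly_invariant_def conditional_measure_def
proof (intro ballI allI impI)
  fix s A assume "s \<in> V" "A \<subseteq> V" "inj_on (\<lambda>a. a * s) A"
  with assms have "\<mu> ((\<lambda>a. a * s) ` A) = \<mu> A"
    unfolding right_fairly_invariant_def by blast
  thus "\<mu> ((\<lambda>a. a * s) ` A) / \<mu> V = \<mu> A / \<mu> V" by simp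
qed

theorem mainTheorem13:
  fixes \<mu> :: "'a::semigroup_mult set \<Rightarrow> real" and T :: "'a set"
  assumes "fa_prob_measure UNIV \<mu>" and "subsemigroup T" and "\<mu> T > 0"
  shows "(left_fairly_invariant UNIV \<mu> \<longrightarrow> left_fairly_amenable T) \<and>
         (right_fairly_invariant UNIV \<mu> \<longrightarrow> right_fairly_amenable T)"
proof -
  have prob: "fa_prob_measure T (conditional_measure \<mu> T)"
    using fa_prob_measure_conditional[OF assms(1) _ assms(3)] by simp
  show ?thesis
  proof (intro conjI impI)
    assume "left_fairly_invariant UNIV \<mu>"
    hence "left_fairly_invariant T (conditional_measure \<mu> T)"
      by (rule left_fairly_invariant_conditional) simp
    with prob show "left_fairly_amenable T"
      unfolding left_fairly_amenable_def by blast
  next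
    assume "right_fairly_invariant UNIV \<mu>"
    hence "right_fairly_invariant T (conditional_measure \<mu> T)"
      by (rule right_fairly_invariant_conditional) simp
    with prob show "right_fairly_amenable T"
      unfolding right_fairly_amenable_def by blast
  qed
qed

end
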